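(* Let $j\in\mathbb Z$ and $\nu\in\mathbb C$ with $3\nu\in\mathbb Z$, $3\nu\equiv j\bmod 2$, and such that it is not the case that $\nu\in\mathbb Z$ and $\nu\equiv j\bmod 2$. Then the set $\{j'\in\mathbb Z:(j',\nu')\in W(j,\nu)\text{ for some }\nu'\}$ contains representatives of all three classes of $\mathbb Z/3\mathbb Z$.
   Context: $W$ is the group of linear maps of $\mathbb C^2$ generated by $S_1(j,\nu)=\bigl(\frac{3\nu-j}2,\frac{j+\nu}2\bigr)$ and $S_2(j,\nu)=\bigl(-\frac{3\nu+j}2,\frac{\nu-j}2\bigr)$ (isomorphic to the symmetric group $S_3$); $W(j,\nu)$ denotes the orbit of $(j,\nu)$. For $x\in\mathbb C$ and $j\in\mathbb Z$, "$x\equiv j\bmod 2$" means $x\in\mathbb Z$ and $x-j\in2\mathbb Z$. *)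

theory Defs
  imports Complex_Main
begin

definition S1 :: "complex \<times> complex \<Rightarrow> complex \<times> complex" where
  "S1 p = ((3 * snd p - fst p) / 2, (fst p + snd p) / 2)"

definition S2 :: "complex \<times> complex \<Rightarrow> complex \<times> complex" where
  "S2 p = (- (3 * snd p + fst p) / 2, (snd p - fst p) / 2)"

text \<open>The group W generated by S1, S2 (both are involutions, and W is finite),
  so the orbit W(j,nu) is the closure of the point under applying S1 and S2.\<close>
inductive_set Worbit :: "complex \<times> complex \<Rightarrow> (complex \<times> complex) set"
  for p :: "complex \<times> complex" where
  base: "p \<in> Worbit p"
| step1: "q \<in> Worbit p \<Longrightarrow> S1 q \<in> Worbit p"
| step2: "q \<in> Worbit p \<Longrightarrow> S2 q \<in> Worbit p"

definition cong2 :: "complex \<Rightarrow> int \<Rightarrow> bool" where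
  "cong2 x j \<longleftrightarrow> (\<exists>k::int. x = of_int j + 2 * of_int k)"

end

theory Submission
  imports Defs
begin

text \<open>Write \<open>3\<nu> = j + 2k\<close>. Then \<open>S1\<close> and \<open>S2\<close> move the first coordinate \<open>j\<close> to \<open>k\<close> and
  to \<open>-j - k\<close>. If \<open>j \<equiv> k mod 3\<close>, then \<open>\<nu> = j + 2(k - j)/3\<close> would be an integer congruent
  to \<open>j\<close> mod 2, which is excluded. So \<open>j \<not>\<equiv> k mod 3\<close>, and since \<open>j + k + (-j - k) = 0\<close>,
  the three first coordinates \<open>j, k, -j - k\<close> are pairwise incongruent mod 3.\<close>

lemma fst_S1_eq:
  assumes "3 * \<nu> = of_int j + 2 * of_int k"
  shows "fst (S1 (of_int j, \<nu>)) = of_int k"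
  using assms unfolding S1_def by simp

lemma fst_S2_eq:
  assumes "3 * \<nu> = of_int j + 2 * of_int k"
  shows "fst (S2 (of_int j, \<nu>)) = of_int (- j - k)"
  using assms unfolding S2_def by (simp add: field_simps)

lemma Worbit_fst_S1:
  assumes "3 * \<nu> = of_int j + 2 * of_int k"
  shows "\<exists>\<nu>'. (of_int k, \<nu>') \<in> Worbit (of_int j, \<nu>)"
  using Worbit.step1[OF Worbit.base] fst_S1_eq[OF assms] by (metis prod.collapse)

lemma Worbit_fst_S2:
  assumes "3 * \<nu> = of_int j + 2 * of_int k"
  shows "\<exists>\<nu>'. (of_int (- j - k), \<nu>') \<in> Worbit (of_int j, \<nu>)"
  using Worbit.step2[OF Worbit.base] fst_S2_eq[OF assms] by (metis prod.collapse)

lemma int_cong2_if_mod3_eq: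
  assumes "3 * \<nu> = of_int j + 2 * of_int k" and "j mod 3 = k mod 3"
  shows "\<nu> \<in> \<int> \<and> cong2 \<nu> j"
proof -
  obtain t where "k = j + 3 * t"
    using assms(2) by (metis mod_eqE mult.commute add.commute diff_add_cancel)
  with assms(1) have "3 * \<nu> = 3 * of_int (j + 2 * t)"
    by (simp add: algebra_simps)
  then have "\<nu> = of_int (j + 2 * t)"
    by (metis mult_cancel_left zero_neq_numeral)
  then show ?thesis
    unfolding cong2_def by (auto intro: exI[of _ t])
qed

lemma mod3_cases_of_mod3_neq:
  fixes j k r :: int
  assumes "j mod 3 \<noteq> k mod 3" and "r \<in> {0, 1, 2}"
  shows "j mod 3 = r \<or> k mod 3 = r \<or> (- j - k) mod 3 = r"
  using assms by (auto; presburger)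

theorem lemma9p2:
  fixes j :: int and \<nu> :: complex
  assumes "3 * \<nu> \<in> \<int>"
    and "cong2 (3 * \<nu>) j"
    and "\<not> (\<nu> \<in> \<int> \<and> cong2 \<nu> j)"
  shows "\<forall>r::int \<in> {0, 1, 2}. \<exists>j'::int. \<exists>\<nu>'::complex.
           (of_int j', \<nu>') \<in> Worbit (of_int j, \<nu>) \<and> j' mod 3 = r"
proof
  fix r :: int
  assume r: "r \<in> {0, 1, 2}"
  obtain k :: int where k: "3 * \<nu> = of_int j + 2 * of_int k"
    using assms(2) unfolding cong2_def by blast
  have "j mod 3 \<noteq> k mod 3"
    using int_cong2_if_mod3_eq[OF k] assms(3) by blast
  then have "j mod 3 = r \<or> k mod 3 = r \<or> (- j - k) mod 3 = r"
    using mod3_cases_of_mod3_neq r by blast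
  then show "\<exists>j' \<nu>'. (of_int j', \<nu>') \<in> Worbit (of_int j, \<nu>) \<and> j' mod 3 = r"
    using Worbit.base Worbit_fst_S1[OF k] Worbit_fst_S2[OF k] by blast
qed

end
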